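(* Let $C>0$ and $\Gamma\in G(n,p)$. If $p<\frac{\log(n)+\log(\log(n))-\omega(n)}{n}$ for some $\omega(n)\to+\infty$, then a.a.s. $\Gamma$ has at least $C$ non-adjacent domination pairs; if further $pn^2\to\infty$, then a.a.s. $\Gamma$ also has at least $C$ adjacent domination pairs. Dually, if $1-p<\frac{\log(n)+\log(\log(n))-\omega(n)}{n}$ for some $\omega(n)\to+\infty$, then a.a.s. $\Gamma$ has at least $C$ adjacent domination pairs; if further $(1-p)pn^2\to\infty$, then a.a.s. $\Gamma$ also has at least $C$ non-adjacent domination pairs.
   Context: $G(n,p)$ is the Erdős–Rényi random graph on $n$ vertices with each edge present independently with probability $p=p(n)$; a.a.s. means with probability tending to $1$ as $n\to\infty$; $\log$ is natural logarithm. $\mathrm{st}(a)$ is $a$ together with its neighbours; for distinct $a,b$, $a$ dominates $b$ if every neighbour of $b$ lies in $\mathrm{st}(a)$; such a domination pair $(a,b)$ is adjacent if $a\sim b$ and non-adjacent otherwise. *)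

theory Defs
  imports "HOL-Analysis.Analysis"
begin

text \<open>Vertex set of G(n,p) is {0..<n}; a graph is a set of 2-element subsets (edges).\<close>

definition all_edges :: "nat \<Rightarrow> nat set set" where
  "all_edges n = {e. \<exists>a b. a < n \<and> b < n \<and> a \<noteq> b \<and> e = {a, b}}"

definition gnp_prob :: "nat \<Rightarrow> real \<Rightarrow> (nat set set \<Rightarrow> bool) \<Rightarrow> real" where
  "gnp_prob n p P = (\<Sum>E \<in> Pow (all_edges n).
     (if P E then p ^ card E * (1 - p) ^ (card (all_edges n) - card E) else 0))"

definition adj :: "nat set set \<Rightarrow> nat \<Rightarrow> nat \<Rightarrow> bool" where
  "adj E a b \<longleftrightarrow> a \<noteq> b \<and> {a, b} \<in> E"

definition dominates :: "nat \<Rightarrow> nat set set \<Rightarrow> nat \<Rightarrow> nat \<Rightarrow> bool" where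
  "dominates n E a b \<longleftrightarrow> a < n \<and> b < n \<and> a \<noteq> b \<and>
     (\<forall>c < n. adj E b c \<longrightarrow> c = a \<or> adj E a c)"

definition adj_dom_pairs :: "nat \<Rightarrow> nat set set \<Rightarrow> (nat \<times> nat) set" where
  "adj_dom_pairs n E = {(a, b). dominates n E a b \<and> adj E a b}"

definition nonadj_dom_pairs :: "nat \<Rightarrow> nat set set \<Rightarrow> (nat \<times> nat) set" where
  "nonadj_dom_pairs n E = {(a, b). dominates n E a b \<and> \<not> adj E a b}"

definition aas :: "(nat \<Rightarrow> real) \<Rightarrow> (nat \<Rightarrow> nat set set \<Rightarrow> bool) \<Rightarrow> bool" where
  "aas p P \<longleftrightarrow> ((\<lambda>n. gnp_prob n (p n) (P n)) \<longlongrightarrow> 1) sequentially"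

end

theory Submission
  imports Defs "HOL-Real_Asymp.Real_Asymp"
begin

text \<open>Below the threshold the random graph still has many vertices of degree at most one, and
  each of them yields a domination pair: every other vertex dominates an isolated vertex, the
  neighbour of a leaf dominates it (an adjacent pair), and so does every further neighbour of that
  neighbour (a non-adjacent pair) unless the leaf lies on an isolated edge. When \<open>pn \<le> (log n)/4\<close>
  the isolated vertices are plentiful; otherwise the leaves are, while isolated edges are rare.
  The number of isolated vertices and of leaves is concentrated by the second moment method, and
  isolated edges are controlled by Markov's inequality. The dual statements follow by passing to
  the complement graph, which is distributed as \<open>G(n,1-p)\<close> and exchanges adjacent and
  non-adjacent domination pairs (reversing each pair).\<close>

section \<open>Expectations over random subsets\<close>

definition bernoulli_weight :: "'a set \<Rightarrow> real \<Rightarrow> 'a set \<Rightarrow> real" where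
  "bernoulli_weight U p F = p ^ card F * (1 - p) ^ (card U - card F)"

definition bernoulli_expect :: "'a set \<Rightarrow> real \<Rightarrow> ('a set \<Rightarrow> real) \<Rightarrow> real" where
  "bernoulli_expect U p f = (\<Sum>F\<in>Pow U. bernoulli_weight U p F * f F)"

lemma bernoulli_weight_nonneg: "0 \<le> p \<Longrightarrow> p \<le> 1 \<Longrightarrow> 0 \<le> bernoulli_weight U p F"
  by (simp add: bernoulli_weight_def)

lemma bernoulli_weight_Un:
  assumes "finite A" "finite B" "A \<inter> B = {}" "F \<subseteq> A" "G \<subseteq> B"
  shows "bernoulli_weight (A \<union> B) p (F \<union> G) = bernoulli_weight A p F * bernoulli_weight B p G"
proof -
  have "finite F" "finite G" using assms by (auto intro: finite_subset)
  then have "card (F \<union> G) = card F + card G" "card (A \<union> B) = card A + card B"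
    using assms by (auto intro: card_Un_disjoint)
  moreover have "card F \<le> card A" "card G \<le> card B" using assms by (simp_all add: card_mono)
  ultimately have "card (A \<union> B) - card (F \<union> G) = (card A - card F) + (card B - card G)" by simp
  then show ?thesis by (simp add: bernoulli_weight_def power_add \<open>card (F \<union> G) = _\<close>)
qed

lemma bernoulli_expect_Un:
  assumes "finite A" "finite B" "A \<inter> B = {}"
  shows "bernoulli_expect (A \<union> B) p h =
    (\<Sum>F\<in>Pow A. \<Sum>G\<in>Pow B. bernoulli_weight A p F * bernoulli_weight B p G * h (F \<union> G))"
proof -
  have inj: "inj_on (\<lambda>(F, G). F \<union> G) (Pow A \<times> Pow B)"
  proof (rule inj_onI, clarsimp)
    fix F G F' G' assume "F \<subseteq> A" "G \<subseteq> B" "F' \<subseteq> A" "G' \<subseteq> B" "F \<union> G = F' \<union> G'"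
    then show "F = F' \<and> G = G'" using assms(3) by blast
  qed
  have img: "Pow (A \<union> B) = (\<lambda>(F, G). F \<union> G) ` (Pow A \<times> Pow B)"
  proof (intro set_eqI iffI)
    fix X assume "X \<in> Pow (A \<union> B)"
    then have "X = (X \<inter> A) \<union> (X \<inter> B)" "(X \<inter> A, X \<inter> B) \<in> Pow A \<times> Pow B" by auto
    then show "X \<in> (\<lambda>(F, G). F \<union> G) ` (Pow A \<times> Pow B)" by (metis (no_types, lifting) case_prod_conv image_eqI)
  qed auto
  have "bernoulli_expect (A \<union> B) p h =
      (\<Sum>(F, G)\<in>Pow A \<times> Pow B. bernoulli_weight (A \<union> B) p (F \<union> G) * h (F \<union> G))"
    unfolding bernoulli_expect_def img by (subst sum.reindex[OF inj]) (simp add: case_prod_beta)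
  also have "\<dots> = (\<Sum>(F, G)\<in>Pow A \<times> Pow B. bernoulli_weight A p F * bernoulli_weight B p G * h (F \<union> G))"
    by (rule sum.cong) (auto simp: bernoulli_weight_Un assms)
  finally show ?thesis by (simp only: sum.cartesian_product)
qed

lemma sum_bernoulli_weight: "finite A \<Longrightarrow> (\<Sum>F\<in>Pow A. bernoulli_weight A p F) = 1"
proof (induction A rule: finite_induct)
  case empty
  then show ?case by (simp add: bernoulli_weight_def)
next
  case (insert x A)
  have "Pow {x} = {{}, {x}}" by blast
  then have single: "(\<Sum>G\<in>Pow {x}. bernoulli_weight {x} p G) = 1" by (simp add: bernoulli_weight_def)
  have "(\<Sum>F\<in>Pow (A \<union> {x}). bernoulli_weight (A \<union> {x}) p F) =
      (\<Sum>F\<in>Pow A. bernoulli_weight A p F * (\<Sum>G\<in>Pow {x}. bernoulli_weight {x} p G))"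
    using bernoulli_expect_Un[of A "{x}" p "\<lambda>_. 1"] insert.hyps
    by (simp add: bernoulli_expect_def sum_distrib_left)
  then show ?case using insert.IH single by simp
qed

lemma bernoulli_expect_const: "finite A \<Longrightarrow> bernoulli_expect A p (\<lambda>_. c) = c"
  unfolding bernoulli_expect_def by (simp add: sum_distrib_right[symmetric] sum_bernoulli_weight)

lemma bernoulli_expect_sum:
  "bernoulli_expect U p (\<lambda>E. \<Sum>i\<in>I. f i E) = (\<Sum>i\<in>I. bernoulli_expect U p (f i))"
  unfolding bernoulli_expect_def sum_distrib_left by (rule sum.swap)

lemma bernoulli_expect_add:
  "bernoulli_expect U p (\<lambda>E. f E + g E) = bernoulli_expect U p f + bernoulli_expect U p g"
  unfolding bernoulli_expect_def by (simp add: distrib_left sum.distrib)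

lemma bernoulli_expect_cmult: "bernoulli_expect U p (\<lambda>E. c * f E) = c * bernoulli_expect U p f"
  unfolding bernoulli_expect_def by (simp add: sum_distrib_left mult.left_commute)

lemma bernoulli_expect_mono:
  "0 \<le> p \<Longrightarrow> p \<le> 1 \<Longrightarrow> (\<And>E. E \<subseteq> U \<Longrightarrow> f E \<le> g E) \<Longrightarrow>
    bernoulli_expect U p f \<le> bernoulli_expect U p g"
  unfolding bernoulli_expect_def by (rule sum_mono) (auto intro: mult_left_mono bernoulli_weight_nonneg)

lemma bernoulli_expect_cong:
  "(\<And>E. E \<subseteq> U \<Longrightarrow> f E = g E) \<Longrightarrow> bernoulli_expect U p f = bernoulli_expect U p g"
  unfolding bernoulli_expect_def by (rule sum.cong) auto

lemma bernoulli_expect_restrict: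
  assumes "finite U" "V \<subseteq> U"
  shows "bernoulli_expect U p (\<lambda>E. h (E \<inter> V)) = bernoulli_expect V p h"
proof -
  have fin: "finite V" "finite (U - V)" using assms finite_subset by auto
  have "U = V \<union> (U - V)" using assms by auto
  then have "bernoulli_expect U p (\<lambda>E. h (E \<inter> V)) =
      (\<Sum>F\<in>Pow V. \<Sum>G\<in>Pow (U - V). bernoulli_weight V p F * bernoulli_weight (U - V) p G * h ((F \<union> G) \<inter> V))"
    using bernoulli_expect_Un[OF fin, of p] by auto
  also have "\<dots> = (\<Sum>F\<in>Pow V. bernoulli_weight V p F * h F * (\<Sum>G\<in>Pow (U - V). bernoulli_weight (U - V) p G))"
  proof (rule sum.cong[OF refl])
    fix F assume F: "F \<in> Pow V"
    have "(\<Sum>G\<in>Pow (U - V). bernoulli_weight V p F * bernoulli_weight (U - V) p G * h ((F \<union> G) \<inter> V)) =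
        (\<Sum>G\<in>Pow (U - V). bernoulli_weight V p F * h F * bernoulli_weight (U - V) p G)"
    proof (rule sum.cong[OF refl])
      fix G assume "G \<in> Pow (U - V)"
      then have "(F \<union> G) \<inter> V = F" using F by auto
      then show "bernoulli_weight V p F * bernoulli_weight (U - V) p G * h ((F \<union> G) \<inter> V) =
          bernoulli_weight V p F * h F * bernoulli_weight (U - V) p G" by simp
    qed
    then show "(\<Sum>G\<in>Pow (U - V). bernoulli_weight V p F * bernoulli_weight (U - V) p G * h ((F \<union> G) \<inter> V)) =
        bernoulli_weight V p F * h F * (\<Sum>G\<in>Pow (U - V). bernoulli_weight (U - V) p G)"
      by (simp add: sum_distrib_left)
  qed
  finally show ?thesis using fin by (simp add: sum_bernoulli_weight bernoulli_expect_def)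
qed

lemma bernoulli_expect_mult_indep:
  assumes "finite A" "finite B" "A \<inter> B = {}"
  shows "bernoulli_expect (A \<union> B) p (\<lambda>H. f (H \<inter> A) * g (H \<inter> B)) =
    bernoulli_expect A p f * bernoulli_expect B p g"
proof -
  have "bernoulli_expect (A \<union> B) p (\<lambda>H. f (H \<inter> A) * g (H \<inter> B)) =
     (\<Sum>F\<in>Pow A. \<Sum>G\<in>Pow B. (bernoulli_weight A p F * f F) * (bernoulli_weight B p G * g G))"
    unfolding bernoulli_expect_Un[OF assms]
  proof (intro sum.cong refl)
    fix F G assume "F \<in> Pow A" "G \<in> Pow B"
    then have "(F \<union> G) \<inter> A = F" "(F \<union> G) \<inter> B = G" using assms(3) by auto
    then show "bernoulli_weight A p F * bernoulli_weight B p G * (f ((F \<union> G) \<inter> A) * g ((F \<union> G) \<inter> B)) =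
        (bernoulli_weight A p F * f F) * (bernoulli_weight B p G * g G)"
      by simp
  qed
  then show ?thesis unfolding bernoulli_expect_def by (simp add: sum_product)
qed

lemma bernoulli_expect_singleton:
  "bernoulli_expect {x} p g = (1 - p) * g {} + p * g {x}"
proof -
  have "Pow {x} = {{}, {x}}" by blast
  then show ?thesis by (simp add: bernoulli_expect_def bernoulli_weight_def)
qed

definition binom_prob :: "nat \<Rightarrow> real \<Rightarrow> nat \<Rightarrow> real" where
  "binom_prob m p k = real (m choose k) * p ^ k * (1 - p) ^ (m - k)"

lemma bernoulli_expect_card_eq:
  assumes "finite V"
  shows "bernoulli_expect V p (\<lambda>F. of_bool (card F = k)) = binom_prob (card V) p k"
proof -
  have "bernoulli_expect V p (\<lambda>F. of_bool (card F = k)) =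
      (\<Sum>F\<in>{B. B \<subseteq> V \<and> card B = k}. bernoulli_weight V p F)"
    unfolding bernoulli_expect_def by (rule sum.mono_neutral_cong_right) (auto simp: assms)
  also have "\<dots> = (\<Sum>F\<in>{B. B \<subseteq> V \<and> card B = k}. p ^ k * (1 - p) ^ (card V - k))"
    by (rule sum.cong) (auto simp: bernoulli_weight_def)
  finally show ?thesis using n_subsets[OF assms, of k] by (simp add: binom_prob_def)
qed

lemma bernoulli_expect_card_add_eq:
  assumes "finite V"
  shows "bernoulli_expect V p (\<lambda>F. of_bool (c + card F = k)) =
    (if c \<le> k then binom_prob (card V) p (k - c) else 0)"
proof -
  have "bernoulli_expect V p (\<lambda>F. of_bool (c + card F = k)) =
      bernoulli_expect V p (\<lambda>F. if c \<le> k then of_bool (card F = k - c) else 0)"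
    by (rule bernoulli_expect_cong) auto
  then show ?thesis by (simp add: bernoulli_expect_card_eq bernoulli_expect_const assms)
qed

lemma bernoulli_expect_empty_indicator:
  assumes "finite V"
  shows "bernoulli_expect V p (\<lambda>F. of_bool (F = {})) = (1 - p) ^ card V"
proof -
  have "bernoulli_expect V p (\<lambda>F. of_bool (F = {})) = bernoulli_expect V p (\<lambda>F. of_bool (card F = 0))"
    using assms by (intro bernoulli_expect_cong) (auto dest: finite_subset)
  also have "\<dots> = binom_prob (card V) p 0" by (rule bernoulli_expect_card_eq[OF assms])
  finally show ?thesis by (simp add: binom_prob_def)
qed

lemma finite_all_edges: "finite (all_edges n)"
proof -
  have "all_edges n \<subseteq> Pow {..<n}" unfolding all_edges_def by auto
  then show ?thesis by (rule finite_subset) auto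
qed

lemma gnp_prob_eq_expect: "gnp_prob n p P = bernoulli_expect (all_edges n) p (\<lambda>E. of_bool (P E))"
  unfolding gnp_prob_def bernoulli_expect_def bernoulli_weight_def by (rule sum.cong) auto

lemma gnp_prob_le_1: "0 \<le> p \<Longrightarrow> p \<le> 1 \<Longrightarrow> gnp_prob n p P \<le> 1"
  using bernoulli_expect_mono[of p "all_edges n" "\<lambda>E. of_bool (P E)" "\<lambda>_. 1"]
  by (simp add: gnp_prob_eq_expect bernoulli_expect_const finite_all_edges)

lemma gnp_prob_mono:
  assumes "0 \<le> p" "p \<le> 1" and "\<And>E. E \<subseteq> all_edges n \<Longrightarrow> P E \<Longrightarrow> Q E"
  shows "gnp_prob n p P \<le> gnp_prob n p Q"
  unfolding gnp_prob_eq_expect using assms by (intro bernoulli_expect_mono) auto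

lemma gnp_prob_disj_le:
  assumes "0 \<le> p" "p \<le> 1"
  shows "gnp_prob n p (\<lambda>E. P E \<or> Q E) \<le> gnp_prob n p P + gnp_prob n p Q"
proof -
  have "bernoulli_expect (all_edges n) p (\<lambda>E. of_bool (P E \<or> Q E))
      \<le> bernoulli_expect (all_edges n) p (\<lambda>E. of_bool (P E) + of_bool (Q E))"
    using assms by (intro bernoulli_expect_mono) auto
  then show ?thesis unfolding gnp_prob_eq_expect bernoulli_expect_add .
qed

lemma gnp_prob_not: "gnp_prob n p (\<lambda>E. \<not> P E) = 1 - gnp_prob n p P"
proof -
  have "bernoulli_expect (all_edges n) p (\<lambda>E. of_bool (\<not> P E)) =
      bernoulli_expect (all_edges n) p (\<lambda>E. 1 + (-1) * of_bool (P E))"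
    by (intro bernoulli_expect_cong) auto
  then show ?thesis unfolding gnp_prob_eq_expect bernoulli_expect_add bernoulli_expect_cmult
    by (simp add: bernoulli_expect_const finite_all_edges)
qed

lemma gnp_prob_markov:
  assumes "0 \<le> p" "p \<le> 1" "t > 0" and "\<And>E. E \<subseteq> all_edges n \<Longrightarrow> 0 \<le> X E"
  shows "gnp_prob n p (\<lambda>E. t \<le> X E) \<le> bernoulli_expect (all_edges n) p X / t"
proof -
  have "t * gnp_prob n p (\<lambda>E. t \<le> X E) = bernoulli_expect (all_edges n) p (\<lambda>E. t * of_bool (t \<le> X E))"
    by (simp add: gnp_prob_eq_expect bernoulli_expect_cmult)
  also have "\<dots> \<le> bernoulli_expect (all_edges n) p X"
    using assms by (intro bernoulli_expect_mono) auto
  finally show ?thesis using \<open>t > 0\<close> by (simp add: field_simps)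
qed

text \<open>Chebyshev's inequality; the hypothesis on the second moment says that the variance
  is at most \<open>\<mu> + a \<mu>\<^sup>2\<close>.\<close>
lemma gnp_prob_less_half_mean:
  assumes p: "0 \<le> p" "p \<le> 1"
    and mean: "bernoulli_expect (all_edges n) p X = \<mu>" "\<mu> > 0"
    and second: "bernoulli_expect (all_edges n) p (\<lambda>E. X E ^ 2) \<le> \<mu> ^ 2 + \<mu> + a * \<mu> ^ 2"
  shows "gnp_prob n p (\<lambda>E. X E < \<mu> / 2) \<le> 4 / \<mu> + 4 * a"
proof -
  have "bernoulli_expect (all_edges n) p (\<lambda>E. (X E - \<mu>) ^ 2) =
      bernoulli_expect (all_edges n) p (\<lambda>E. X E ^ 2 + (-2 * \<mu>) * X E + \<mu> ^ 2)"
    by (rule bernoulli_expect_cong) (simp add: power2_eq_square algebra_simps)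
  also have "\<dots> = bernoulli_expect (all_edges n) p (\<lambda>E. X E ^ 2) + (-2 * \<mu>) * \<mu> + \<mu> ^ 2"
    by (simp only: bernoulli_expect_add bernoulli_expect_cmult bernoulli_expect_const finite_all_edges mean)
  also have "\<dots> = bernoulli_expect (all_edges n) p (\<lambda>E. X E ^ 2) - \<mu> ^ 2"
    by (simp add: power2_eq_square)
  finally have variance: "bernoulli_expect (all_edges n) p (\<lambda>E. (X E - \<mu>) ^ 2) \<le> \<mu> + a * \<mu> ^ 2"
    using second by linarith
  have "\<mu> ^ 2 / 4 * of_bool (X E < \<mu> / 2) \<le> (X E - \<mu>) ^ 2" for E
  proof (cases "X E < \<mu> / 2")
    case True
    then have "(\<mu> / 2) ^ 2 \<le> (\<mu> - X E) ^ 2" using mean by (intro power_mono) auto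
    then show ?thesis using True by (simp add: power2_eq_square algebra_simps)
  qed simp
  then have "bernoulli_expect (all_edges n) p (\<lambda>E. \<mu> ^ 2 / 4 * of_bool (X E < \<mu> / 2))
      \<le> bernoulli_expect (all_edges n) p (\<lambda>E. (X E - \<mu>) ^ 2)"
    by (intro bernoulli_expect_mono[OF p])
  then have "\<mu> ^ 2 / 4 * gnp_prob n p (\<lambda>E. X E < \<mu> / 2) \<le> \<mu> + a * \<mu> ^ 2"
    using variance unfolding gnp_prob_eq_expect bernoulli_expect_cmult by linarith
  also have "\<dots> = \<mu> ^ 2 / 4 * (4 / \<mu> + 4 * a)"
    using mean by (simp add: field_simps power2_eq_square)
  finally show ?thesis using mean by (simp add: mult_le_cancel_left_pos)
qed

definition compl_graph :: "nat \<Rightarrow> nat set set \<Rightarrow> nat set set" where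
  "compl_graph n E = all_edges n - E"

lemma gnp_prob_compl_graph: "gnp_prob n p (\<lambda>E. P (compl_graph n E)) = gnp_prob n (1 - p) P"
proof -
  let ?N = "all_edges n"
  have bij: "bij_betw (compl_graph n) (Pow ?N) (Pow ?N)"
    by (rule bij_betwI[where g = "compl_graph n"]) (auto simp: compl_graph_def)
  have "gnp_prob n (1 - p) P = (\<Sum>F\<in>Pow ?N. if P (compl_graph n F)
      then (1 - p) ^ card (compl_graph n F) * (1 - (1 - p)) ^ (card ?N - card (compl_graph n F)) else 0)"
    unfolding gnp_prob_def by (rule sum.reindex_bij_betw[OF bij, symmetric])
  also have "\<dots> = gnp_prob n p (\<lambda>E. P (compl_graph n E))"
    unfolding gnp_prob_def
  proof (rule sum.cong[OF refl])
    fix F assume "F \<in> Pow ?N"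
    then have "card (compl_graph n F) = card ?N - card F" "card F \<le> card ?N"
      using finite_all_edges by (auto simp: compl_graph_def card_Diff_subset card_mono finite_subset)
    then show "(if P (compl_graph n F) then (1 - p) ^ card (compl_graph n F) *
        (1 - (1 - p)) ^ (card ?N - card (compl_graph n F)) else 0) =
        (if P (compl_graph n F) then p ^ card F * (1 - p) ^ (card ?N - card F) else 0)"
      by simp
  qed
  finally show ?thesis ..
qed

section \<open>Vertices of small degree\<close>

definition star_edges :: "nat \<Rightarrow> nat \<Rightarrow> nat set set" where
  "star_edges n b = (\<lambda>c. {b, c}) ` ({..<n} - {b})"

definition deg :: "nat \<Rightarrow> nat set set \<Rightarrow> nat \<Rightarrow> nat" where
  "deg n E b = card (E \<inter> star_edges n b)"

definition vertices_of_degree :: "nat \<Rightarrow> nat \<Rightarrow> nat set set \<Rightarrow> nat set" where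
  "vertices_of_degree n k E = {b. b < n \<and> deg n E b = k}"

lemma mem_star_edges: "x \<in> star_edges n b \<longleftrightarrow> (\<exists>c. c < n \<and> c \<noteq> b \<and> x = {b, c})"
  unfolding star_edges_def by auto

lemma finite_star_edges: "finite (star_edges n b)"
  unfolding star_edges_def by auto

lemma star_edges_subset: "b < n \<Longrightarrow> star_edges n b \<subseteq> all_edges n"
  unfolding star_edges_def all_edges_def by auto

lemma card_star_edges: "b < n \<Longrightarrow> card (star_edges n b) = n - 1"
proof -
  have "inj_on (\<lambda>c. {b, c}) ({..<n} - {b})"
    by (rule inj_onI) (auto simp: doubleton_eq_iff)
  moreover assume "b < n"
  ultimately show ?thesis unfolding star_edges_def by (simp add: card_image)
qed

lemma doubleton_in_star_edges_iff: "c < n \<Longrightarrow> {b, c} \<in> star_edges n b \<longleftrightarrow> c \<noteq> b"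
proof
  assume "{b, c} \<in> star_edges n b"
  then obtain c' where "c' \<noteq> b" "{b, c} = {b, c'}" unfolding mem_star_edges by blast
  then have "c' \<in> {b, c}" by blast
  then show "c \<noteq> b" using \<open>c' \<noteq> b\<close> by blast
qed (auto simp: mem_star_edges)

lemma edge_in_star_edges_iff_adj: "c < n \<Longrightarrow> {b, c} \<in> E \<inter> star_edges n b \<longleftrightarrow> adj E b c"
  unfolding adj_def using doubleton_in_star_edges_iff[of c n b] by auto

lemma deg_0_imp_not_adj:
  assumes "deg n E b = 0" "c < n"
  shows "\<not> adj E b c"
proof -
  have "E \<inter> star_edges n b = {}" using assms(1) finite_star_edges by (simp add: deg_def)
  then show ?thesis using edge_in_star_edges_iff_adj[OF assms(2), of b E] by simp
qed

lemma deg_1_imp_unique_neighbour: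
  assumes "b < n" "deg n E b = 1"
  obtains c where "c < n" "adj E b c" "E \<inter> star_edges n b = {{b, c}}"
    "\<And>x. x < n \<Longrightarrow> adj E b x \<Longrightarrow> x = c"
proof -
  obtain s where s: "E \<inter> star_edges n b = {s}"
    using assms(2) unfolding deg_def by (rule card_1_singletonE)
  then have "s \<in> star_edges n b" by blast
  then obtain c where c: "c < n" "s = {b, c}" unfolding mem_star_edges by blast
  have "x = c" if "x < n" "adj E b x" for x
  proof -
    have "{b, x} \<in> E \<inter> star_edges n b" using edge_in_star_edges_iff_adj that by blast
    then have "x \<in> {b, c}" using s c(2) by (metis insertCI singletonD)
    then show "x = c" using that(2) by (auto simp: adj_def)
  qed
  moreover have "adj E b c" using s c edge_in_star_edges_iff_adj[OF c(1)] by blast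
  ultimately show ?thesis using that c s by blast
qed

definition star_edges_except :: "nat \<Rightarrow> nat \<Rightarrow> nat \<Rightarrow> nat set set" where
  "star_edges_except n b c = star_edges n b - {{b, c}}"

lemma star_edges_except:
  assumes "b < n" "c < n" "b \<noteq> c"
  shows "star_edges n b = {{b, c}} \<union> star_edges_except n b c"
    and "{b, c} \<notin> star_edges_except n b c"
    and "star_edges_except n b c \<inter> star_edges n c = {}"
    and "finite (star_edges_except n b c)"
    and "card (star_edges_except n b c) = n - 2"
    and "star_edges_except n b c \<subseteq> all_edges n"
proof -
  show "star_edges n b = {{b, c}} \<union> star_edges_except n b c"
    using assms unfolding star_edges_except_def by (auto simp: mem_star_edges)
  show "{b, c} \<notin> star_edges_except n b c" unfolding star_edges_except_def by auto
  show "star_edges_except n b c \<inter> star_edges n c = {}"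
    using assms unfolding star_edges_except_def by (auto simp: mem_star_edges doubleton_eq_iff)
  show "finite (star_edges_except n b c)" unfolding star_edges_except_def using finite_star_edges by auto
  have "{b, c} \<in> star_edges n b" using assms by (auto simp: mem_star_edges)
  then show "card (star_edges_except n b c) = n - 2"
    unfolding star_edges_except_def using card_star_edges[OF assms(1)] finite_star_edges
    by (simp add: card_Diff_singleton)
  show "star_edges_except n b c \<subseteq> all_edges n"
    using star_edges_subset[OF assms(1)] unfolding star_edges_except_def by auto
qed

lemma expect_deg_eq:
  assumes "b < n"
  shows "bernoulli_expect (all_edges n) p (\<lambda>E. of_bool (deg n E b = k)) = binom_prob (n - 1) p k"
proof -
  have "bernoulli_expect (all_edges n) p (\<lambda>E. of_bool (deg n E b = k)) =
      bernoulli_expect (star_edges n b) p (\<lambda>F. of_bool (card F = k))"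
    unfolding deg_def by (rule bernoulli_expect_restrict[OF finite_all_edges star_edges_subset[OF assms]])
  then show ?thesis by (simp add: bernoulli_expect_card_eq finite_star_edges card_star_edges assms)
qed

text \<open>The degrees of two distinct vertices are independent once the common edge is fixed.\<close>
lemma expect_deg_eq_pair:
  assumes "b < n" "b' < n" "b \<noteq> b'"
  shows "bernoulli_expect (all_edges n) p (\<lambda>E. of_bool (deg n E b = k) * of_bool (deg n E b' = k)) =
     (1 - p) * binom_prob (n - 2) p k ^ 2 + p * (if k = 0 then 0 else binom_prob (n - 2) p (k - 1) ^ 2)"
proof -
  let ?e = "{b, b'}" and ?A = "star_edges_except n b b'" and ?B = "star_edges_except n b' b"
  note A = star_edges_except[OF assms] and B = star_edges_except[OF assms(2,1) assms(3)[symmetric]]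
  have e: "{b', b} = ?e" by auto
  have stars: "star_edges n b = {?e} \<union> ?A" "star_edges n b' = {?e} \<union> ?B" using A(1) B(1) e by auto
  have U: "{?e} \<union> (?A \<union> ?B) \<subseteq> all_edges n" using A(6) B(6) stars star_edges_subset[OF assms(1)] by auto
  define h :: "nat set set \<Rightarrow> real" where "h F = of_bool (card (F \<inter> star_edges n b) = k) * of_bool (card (F \<inter> star_edges n b') = k)" for F
  define g :: "nat \<Rightarrow> nat set set \<Rightarrow> real" where "g c H = of_bool (c + card H = k)" for c H
  have "bernoulli_expect (all_edges n) p (\<lambda>E. of_bool (deg n E b = k) * of_bool (deg n E b' = k)) =
      bernoulli_expect (all_edges n) p (\<lambda>E. h (E \<inter> ({?e} \<union> (?A \<union> ?B))))"
    unfolding deg_def h_def using stars by (intro bernoulli_expect_cong) (simp add: Int_assoc Int_absorb2)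
  also have "\<dots> = bernoulli_expect ({?e} \<union> (?A \<union> ?B)) p h"
    by (rule bernoulli_expect_restrict[OF finite_all_edges U])
  also have "\<dots> = (\<Sum>F\<in>Pow {?e}. \<Sum>G\<in>Pow (?A \<union> ?B).
      bernoulli_weight {?e} p F * bernoulli_weight (?A \<union> ?B) p G * h (F \<union> G))"
    by (rule bernoulli_expect_Un) (use A B e in auto)
  also have "\<dots> = (\<Sum>F\<in>Pow {?e}. bernoulli_weight {?e} p F * bernoulli_expect (?A \<union> ?B) p (\<lambda>G. h (F \<union> G)))"
    unfolding bernoulli_expect_def by (simp add: sum_distrib_left mult.assoc)
  also have "\<dots> = (\<Sum>F\<in>Pow {?e}. bernoulli_weight {?e} p F *
      (bernoulli_expect ?A p (g (card F)) * bernoulli_expect ?B p (g (card F))))"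
  proof (intro sum.cong refl arg_cong2[where f = "(*)"])
    fix F assume F: "F \<in> Pow {?e}"
    have "h (F \<union> G) = g (card F) (G \<inter> ?A) * g (card F) (G \<inter> ?B)" if "G \<subseteq> ?A \<union> ?B" for G
    proof -
      have "(F \<union> G) \<inter> star_edges n b = F \<union> (G \<inter> ?A)" "(F \<union> G) \<inter> star_edges n b' = F \<union> (G \<inter> ?B)"
        using F that A(3) B(3) stars by auto
      moreover have "finite F" "F \<inter> (G \<inter> ?A) = {}" "F \<inter> (G \<inter> ?B) = {}"
        using F A(2) B(2) e by (auto intro: finite_subset)
      ultimately show ?thesis unfolding h_def g_def using A(4) B(4) by (simp add: card_Un_disjoint)
    qed
    then have "bernoulli_expect (?A \<union> ?B) p (\<lambda>G. h (F \<union> G)) =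
        bernoulli_expect (?A \<union> ?B) p (\<lambda>G. g (card F) (G \<inter> ?A) * g (card F) (G \<inter> ?B))"
      by (rule bernoulli_expect_cong)
    also have "\<dots> = bernoulli_expect ?A p (g (card F)) * bernoulli_expect ?B p (g (card F))"
      using A(3,4) B(4) stars by (intro bernoulli_expect_mult_indep) auto
    finally show "bernoulli_expect (?A \<union> ?B) p (\<lambda>G. h (F \<union> G)) =
        bernoulli_expect ?A p (g (card F)) * bernoulli_expect ?B p (g (card F))" .
  qed
  also have "\<dots> = (1 - p) * binom_prob (n - 2) p k ^ 2 + p * (if k = 0 then 0 else binom_prob (n - 2) p (k - 1) ^ 2)"
  proof -
    have "bernoulli_expect ?A p (g c) = (if c \<le> k then binom_prob (n - 2) p (k - c) else 0)"
      "bernoulli_expect ?B p (g c) = (if c \<le> k then binom_prob (n - 2) p (k - c) else 0)" for c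
      unfolding g_def using bernoulli_expect_card_add_eq A(4,5) B(4,5) by metis+
    then show ?thesis by (simp add: bernoulli_expect_singleton[unfolded bernoulli_expect_def] power2_eq_square)
  qed
  finally show ?thesis .
qed

lemma card_vertices_of_degree:
  "real (card (vertices_of_degree n k E)) = (\<Sum>b<n. of_bool (deg n E b = k))"
proof -
  have "vertices_of_degree n k E = {..<n} \<inter> {b. deg n E b = k}"
    unfolding vertices_of_degree_def by auto
  then show ?thesis by (simp add: sum_of_bool_eq)
qed

lemma expect_card_vertices_of_degree:
  "bernoulli_expect (all_edges n) p (\<lambda>E. real (card (vertices_of_degree n k E))) = real n * binom_prob (n - 1) p k"
  unfolding card_vertices_of_degree by (simp add: bernoulli_expect_sum expect_deg_eq del: sum_of_bool_eq)

lemma expect_card_vertices_of_degree_sq: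
  "bernoulli_expect (all_edges n) p (\<lambda>E. real (card (vertices_of_degree n k E)) ^ 2) =
    real n * binom_prob (n - 1) p k + real n * (real n - 1) *
      ((1 - p) * binom_prob (n - 2) p k ^ 2 + p * (if k = 0 then 0 else binom_prob (n - 2) p (k - 1) ^ 2))"
  (is "_ = _ + _ * ?pair")
proof -
  let ?I = "\<lambda>E b. of_bool (deg n E b = k) :: real"
  have "bernoulli_expect (all_edges n) p (\<lambda>E. real (card (vertices_of_degree n k E)) ^ 2) =
      (\<Sum>b<n. \<Sum>b'<n. bernoulli_expect (all_edges n) p (\<lambda>E. ?I E b * ?I E b'))"
    unfolding card_vertices_of_degree power2_eq_square sum_product
    by (simp only: bernoulli_expect_sum)
  also have "\<dots> = (\<Sum>b<n. binom_prob (n - 1) p k + (real n - 1) * ?pair)"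
  proof (rule sum.cong[OF refl])
    fix b assume b: "b \<in> {..<n}"
    have "(\<Sum>b'<n. bernoulli_expect (all_edges n) p (\<lambda>E. ?I E b * ?I E b')) =
        bernoulli_expect (all_edges n) p (\<lambda>E. ?I E b) +
        (\<Sum>b'\<in>{..<n} - {b}. bernoulli_expect (all_edges n) p (\<lambda>E. ?I E b * ?I E b'))"
      using b by (simp add: sum.remove of_bool_conj[symmetric])
    also have "(\<Sum>b'\<in>{..<n} - {b}. bernoulli_expect (all_edges n) p (\<lambda>E. ?I E b * ?I E b')) =
        (\<Sum>b'\<in>{..<n} - {b}. ?pair)"
      using b by (intro sum.cong refl) (auto simp: expect_deg_eq_pair)
    finally show "(\<Sum>b'<n. bernoulli_expect (all_edges n) p (\<lambda>E. ?I E b * ?I E b')) =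
        binom_prob (n - 1) p k + (real n - 1) * ?pair"
      using b by (simp add: expect_deg_eq of_nat_diff)
  qed
  finally show ?thesis by (simp add: distrib_left)
qed

definition isolated_edge :: "nat \<Rightarrow> nat set set \<Rightarrow> nat \<Rightarrow> nat \<Rightarrow> bool" where
  "isolated_edge n E b c \<longleftrightarrow>
     {b, c} \<in> E \<and> E \<inter> star_edges_except n b c = {} \<and> E \<inter> star_edges_except n c b = {}"

text \<open>Each isolated edge is counted twice, once for each orientation.\<close>
definition isolated_edge_count :: "nat \<Rightarrow> nat set set \<Rightarrow> real" where
  "isolated_edge_count n E = (\<Sum>b<n. \<Sum>c\<in>{..<n} - {b}. of_bool (isolated_edge n E b c))"

lemma expect_isolated_edge:
  assumes "b < n" "c < n" "b \<noteq> c"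
  shows "bernoulli_expect (all_edges n) p (\<lambda>E. of_bool (isolated_edge n E b c)) = p * ((1 - p) ^ (n - 2)) ^ 2"
proof -
  let ?e = "{b, c}" and ?A = "star_edges_except n b c" and ?B = "star_edges_except n c b"
  note A = star_edges_except[OF assms] and B = star_edges_except[OF assms(2,1) assms(3)[symmetric]]
  have e: "{c, b} = ?e" by auto
  have disj: "?A \<inter> ?B = {}" "{?e} \<inter> (?A \<union> ?B) = {}" using A(2,3) B(1,2) e by auto
  have U: "{?e} \<union> (?A \<union> ?B) \<subseteq> all_edges n" using A(1,6) B(6) star_edges_subset[OF assms(1)] by auto
  define f :: "nat set set \<Rightarrow> real" where "f F = of_bool (?e \<in> F)" for F
  define z :: "nat set set \<Rightarrow> real" where "z = (\<lambda>F. of_bool (F = {}))"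
  define h where "h F = f (F \<inter> {?e}) * (\<lambda>H. z (H \<inter> ?A) * z (H \<inter> ?B)) (F \<inter> (?A \<union> ?B))" for F
  have "bernoulli_expect (all_edges n) p (\<lambda>E. of_bool (isolated_edge n E b c)) =
      bernoulli_expect (all_edges n) p (\<lambda>E. h (E \<inter> ({?e} \<union> (?A \<union> ?B))))"
  proof (rule bernoulli_expect_cong)
    fix E :: "nat set set"
    have "E \<inter> ({?e} \<union> (?A \<union> ?B)) \<inter> {?e} = E \<inter> {?e}"
      "E \<inter> ({?e} \<union> (?A \<union> ?B)) \<inter> (?A \<union> ?B) \<inter> ?A = E \<inter> ?A"
      "E \<inter> ({?e} \<union> (?A \<union> ?B)) \<inter> (?A \<union> ?B) \<inter> ?B = E \<inter> ?B" by auto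
    then show "of_bool (isolated_edge n E b c) = h (E \<inter> ({?e} \<union> (?A \<union> ?B)))"
      unfolding h_def f_def z_def isolated_edge_def by auto
  qed
  also have "\<dots> = bernoulli_expect ({?e} \<union> (?A \<union> ?B)) p h"
    by (rule bernoulli_expect_restrict[OF finite_all_edges U])
  also have "\<dots> = bernoulli_expect {?e} p f * bernoulli_expect (?A \<union> ?B) p (\<lambda>H. z (H \<inter> ?A) * z (H \<inter> ?B))"
    unfolding h_def by (rule bernoulli_expect_mult_indep) (use A(4) B(4) disj in auto)
  also have "bernoulli_expect (?A \<union> ?B) p (\<lambda>H. z (H \<inter> ?A) * z (H \<inter> ?B)) =
      bernoulli_expect ?A p z * bernoulli_expect ?B p z"
    by (rule bernoulli_expect_mult_indep) (use A(4) B(4) disj in auto)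
  also have "bernoulli_expect {?e} p f = p"
    by (simp add: f_def bernoulli_expect_singleton)
  also have "bernoulli_expect ?A p z = (1 - p) ^ (n - 2)"
    using A(4,5) by (simp add: z_def bernoulli_expect_empty_indicator)
  also have "bernoulli_expect ?B p z = (1 - p) ^ (n - 2)"
    using B(4,5) by (simp add: z_def bernoulli_expect_empty_indicator)
  also have "p * ((1 - p) ^ (n - 2) * (1 - p) ^ (n - 2)) = p * ((1 - p) ^ (n - 2)) ^ 2"
    by (simp add: power2_eq_square)
  finally show ?thesis .
qed

lemma expect_isolated_edge_count:
  "bernoulli_expect (all_edges n) p (isolated_edge_count n) = real n * (real n - 1) * (p * ((1 - p) ^ (n - 2)) ^ 2)"
proof -
  have "bernoulli_expect (all_edges n) p (isolated_edge_count n) =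
      (\<Sum>b<n. \<Sum>c\<in>{..<n} - {b}. p * ((1 - p) ^ (n - 2)) ^ 2)"
    unfolding isolated_edge_count_def bernoulli_expect_sum by (intro sum.cong refl) (auto simp: expect_isolated_edge)
  then show ?thesis by (simp add: of_nat_diff)
qed

section \<open>Domination pairs from vertices of small degree\<close>

lemma card_le_card_pairs:
  assumes "finite S" "\<And>b. b \<in> A \<Longrightarrow> \<exists>a. (a, b) \<in> S"
  shows "card A \<le> card S"
proof -
  have "A \<subseteq> snd ` S" using assms(2) by force
  then have "card A \<le> card (snd ` S)" using assms(1) by (intro card_mono) auto
  also have "\<dots> \<le> card S" by (rule card_image_le[OF assms(1)])
  finally show ?thesis .
qed

lemma finite_adj_dom_pairs: "finite (adj_dom_pairs n E)"
  by (rule finite_subset[of _ "{..<n} \<times> {..<n}"]) (auto simp: adj_dom_pairs_def dominates_def)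

lemma finite_nonadj_dom_pairs: "finite (nonadj_dom_pairs n E)"
  by (rule finite_subset[of _ "{..<n} \<times> {..<n}"]) (auto simp: nonadj_dom_pairs_def dominates_def)

lemma adj_sym: "adj E a b \<longleftrightarrow> adj E b a"
  unfolding adj_def by (auto simp: insert_commute)

lemma card_isolated_vertices_le:
  assumes "2 \<le> n"
  shows "card (vertices_of_degree n 0 E) \<le> card (nonadj_dom_pairs n E)"
proof (rule card_le_card_pairs[OF finite_nonadj_dom_pairs])
  fix b assume "b \<in> vertices_of_degree n 0 E"
  then have b: "b < n" "deg n E b = 0" unfolding vertices_of_degree_def by auto
  define a where "a = (if b = 0 then 1 else 0 :: nat)"
  have a: "a < n" "a \<noteq> b" using assms unfolding a_def by auto
  have "\<not> adj E b c" if "c < n" for c using deg_0_imp_not_adj[OF b(2) that] .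
  then have "dominates n E a b" "\<not> adj E a b" using a b adj_sym unfolding dominates_def by blast+
  then show "\<exists>a. (a, b) \<in> nonadj_dom_pairs n E" unfolding nonadj_dom_pairs_def by blast
qed

lemma card_leaves_le_adj_dom_pairs: "card (vertices_of_degree n 1 E) \<le> card (adj_dom_pairs n E)"
proof (rule card_le_card_pairs[OF finite_adj_dom_pairs])
  fix b assume "b \<in> vertices_of_degree n 1 E"
  then have b: "b < n" "deg n E b = 1" unfolding vertices_of_degree_def by auto
  then obtain c where c: "c < n" "adj E b c" "\<And>x. x < n \<Longrightarrow> adj E b x \<Longrightarrow> x = c"
    by (metis deg_1_imp_unique_neighbour)
  then have "dominates n E c b" "adj E c b" using b adj_sym unfolding dominates_def adj_def by blast+
  then show "\<exists>a. (a, b) \<in> adj_dom_pairs n E" unfolding adj_dom_pairs_def by blast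
qed

text \<open>A leaf whose neighbour has a further neighbour \<open>a\<close> is dominated by \<open>a\<close>.\<close>
lemma leaf_nonadj_dominated_or_isolated_edge:
  assumes "b < n" "deg n E b = 1"
  shows "(\<exists>a. (a, b) \<in> nonadj_dom_pairs n E) \<or> (\<exists>c<n. c \<noteq> b \<and> isolated_edge n E b c)"
proof -
  obtain c where c: "c < n" "adj E b c" "E \<inter> star_edges n b = {{b, c}}"
    "\<And>x. x < n \<Longrightarrow> adj E b x \<Longrightarrow> x = c"
    using deg_1_imp_unique_neighbour[OF assms] by blast
  have bc: "b \<noteq> c" "{b, c} \<in> E" using c(2) by (auto simp: adj_def)
  show ?thesis
  proof (cases "E \<inter> star_edges_except n c b = {}")
    case True
    have "E \<inter> star_edges_except n b c = {}" using c(3) by (auto simp: star_edges_except_def)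
    then have "isolated_edge n E b c" using True bc(2) by (simp add: isolated_edge_def)
    then show ?thesis using c(1) bc(1) by blast
  next
    case False
    then obtain x where "x \<in> E" "x \<in> star_edges n c" "x \<noteq> {c, b}"
      unfolding star_edges_except_def by blast
    then obtain a where a: "a < n" "a \<noteq> c" "x = {c, a}" unfolding mem_star_edges by blast
    with \<open>x \<noteq> {c, b}\<close> have "a \<noteq> b" by blast
    have "adj E a c" using a \<open>x \<in> E\<close> by (simp add: adj_def insert_commute)
    moreover have "\<not> adj E a b" using c(4)[OF a(1)] a(2) adj_sym[of E a b] by blast
    moreover have "dominates n E a b"
      using a(1) assms(1) \<open>a \<noteq> b\<close> c(4) \<open>adj E a c\<close> unfolding dominates_def by blast
    ultimately show ?thesis unfolding nonadj_dom_pairs_def by blast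
  qed
qed

lemma card_leaves_le_nonadj_dom_pairs:
  "real (card (vertices_of_degree n 1 E)) \<le> real (card (nonadj_dom_pairs n E)) + isolated_edge_count n E"
proof -
  define L where "L = {b. b < n \<and> deg n E b = 1 \<and> (\<exists>a. (a, b) \<in> nonadj_dom_pairs n E)}"
  have iso_nonneg: "0 \<le> (\<Sum>c\<in>{..<n} - {b}. of_bool (isolated_edge n E b c) :: real)" for b
    by (rule sum_nonneg) simp
  have "of_bool (deg n E b = 1) \<le> of_bool (b \<in> L) + (\<Sum>c\<in>{..<n} - {b}. of_bool (isolated_edge n E b c) :: real)"
    if b: "b < n" for b
  proof (cases "deg n E b = 1 \<and> b \<notin> L")
    case True
    then obtain c where "c \<in> {..<n} - {b}" "isolated_edge n E b c"
      using leaf_nonadj_dominated_or_isolated_edge[OF b] b unfolding L_def by auto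
    then have "of_bool (isolated_edge n E b c) \<le> (\<Sum>c\<in>{..<n} - {b}. of_bool (isolated_edge n E b c) :: real)"
      by (intro member_le_sum) auto
    then show ?thesis using True \<open>isolated_edge n E b c\<close> by (simp del: sum_of_bool_eq)
  qed (use iso_nonneg in auto)
  then have "real (card (vertices_of_degree n 1 E)) \<le> (\<Sum>b<n. of_bool (b \<in> L)) + isolated_edge_count n E"
    unfolding card_vertices_of_degree isolated_edge_count_def sum.distrib[symmetric]
    by (intro sum_mono) auto
  also have "(\<Sum>b<n. of_bool (b \<in> L) :: real) = real (card L)"
  proof -
    have "{..<n} \<inter> {b. b \<in> L} = L" unfolding L_def by auto
    then show ?thesis by simp
  qed
  also have "card L \<le> card (nonadj_dom_pairs n E)"
    by (rule card_le_card_pairs[OF finite_nonadj_dom_pairs]) (auto simp: L_def)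
  finally show ?thesis by simp
qed

section \<open>Complementation\<close>

lemma adj_compl_graph: "a < n \<Longrightarrow> b < n \<Longrightarrow> adj (compl_graph n E) a b \<longleftrightarrow> a \<noteq> b \<and> \<not> adj E a b"
  unfolding adj_def compl_graph_def all_edges_def by blast

lemma dominates_compl_graph: "dominates n (compl_graph n E) a b \<longleftrightarrow> dominates n E b a"
proof
  assume d: "dominates n (compl_graph n E) a b"
  then have ab: "a < n" "b < n" "a \<noteq> b" unfolding dominates_def by auto
  have "c = b \<or> adj E b c" if c: "c < n" "adj E a c" for c
  proof (rule ccontr)
    assume "\<not> (c = b \<or> adj E b c)"
    then have "adj (compl_graph n E) b c" using adj_compl_graph[OF ab(2) c(1)] by simp
    then have "c = a \<or> adj (compl_graph n E) a c" using d c(1) unfolding dominates_def by blast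
    then show False using adj_compl_graph[OF ab(1) c(1)] c(2) by (auto simp: adj_def)
  qed
  then show "dominates n E b a" unfolding dominates_def using ab by auto
next
  assume d: "dominates n E b a"
  then have ab: "a < n" "b < n" "a \<noteq> b" unfolding dominates_def by auto
  have "c = a \<or> adj (compl_graph n E) a c" if c: "c < n" "adj (compl_graph n E) b c" for c
  proof (rule ccontr)
    assume "\<not> (c = a \<or> adj (compl_graph n E) a c)"
    then have "adj E a c" using adj_compl_graph[OF ab(1) c(1), of E] by auto
    then have "c = b \<or> adj E b c" using d c(1) unfolding dominates_def by blast
    then show False using c(2) adj_compl_graph[OF ab(2) c(1)] by auto
  qed
  then show "dominates n (compl_graph n E) a b" unfolding dominates_def using ab by auto
qed

lemma adj_compl_graph_if_dominates:
  "dominates n E b a \<Longrightarrow> adj (compl_graph n E) a b \<longleftrightarrow> \<not> adj E b a"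
  using adj_compl_graph[of a n b E] adj_sym[of E a b] unfolding dominates_def by blast

lemma adj_dom_pairs_compl_graph: "adj_dom_pairs n (compl_graph n E) = prod.swap ` nonadj_dom_pairs n E"
  by (force simp: adj_dom_pairs_def nonadj_dom_pairs_def dominates_compl_graph adj_compl_graph_if_dominates)

lemma nonadj_dom_pairs_compl_graph: "nonadj_dom_pairs n (compl_graph n E) = prod.swap ` adj_dom_pairs n E"
  by (force simp: adj_dom_pairs_def nonadj_dom_pairs_def dominates_compl_graph adj_compl_graph_if_dominates)

lemma aas_compl_graph: "aas (\<lambda>n. 1 - p n) P \<longleftrightarrow> aas p (\<lambda>n E. P n (compl_graph n E))"
  unfolding aas_def gnp_prob_compl_graph ..

lemma aas_one_minus_adj_dom_pairs:
  "aas (\<lambda>n. 1 - p n) (\<lambda>n E. C \<le> real (card (adj_dom_pairs n E))) \<longleftrightarrow>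
    aas p (\<lambda>n E. C \<le> real (card (nonadj_dom_pairs n E)))"
  unfolding aas_compl_graph adj_dom_pairs_compl_graph by (simp add: card_image)

lemma aas_one_minus_nonadj_dom_pairs:
  "aas (\<lambda>n. 1 - p n) (\<lambda>n E. C \<le> real (card (nonadj_dom_pairs n E))) \<longleftrightarrow>
    aas p (\<lambda>n E. C \<le> real (card (adj_dom_pairs n E)))"
  unfolding aas_compl_graph nonadj_dom_pairs_compl_graph by (simp add: card_image)

section \<open>Second moment estimates\<close>

lemma one_le_one_minus_mult:
  assumes "0 \<le> (p::real)" "p \<le> 1/2"
  shows "1 \<le> (1 - p) * (1 + 2 * p)"
proof -
  have "0 \<le> p * (1 - 2 * p)" using assms by simp
  then show ?thesis by (simp add: algebra_simps)
qed

lemma gnp_prob_few_isolated_vertices: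
  assumes n: "2 \<le> n" and p: "0 \<le> p" "p \<le> 1/2"
  defines "\<mu> \<equiv> real n * (1 - p) ^ (n - 1)"
  shows "gnp_prob n p (\<lambda>E. real (card (vertices_of_degree n 0 E)) < \<mu> / 2) \<le> 4 / \<mu> + 8 * p"
proof -
  define q where "q = 1 - p"
  define Q where "Q = q ^ (n - 2)"
  have q: "q > 0" and Q: "Q > 0" using p by (auto simp: q_def Q_def)
  have "n - 1 = Suc (n - 2)" using n by simp
  then have \<mu>: "\<mu> = real n * q * Q" and "\<mu> > 0" using n q Q by (simp_all add: \<mu>_def q_def Q_def)
  have "real n * (real n - 1) * (q * Q ^ 2) \<le> real n * real n * (q * Q ^ 2)"
    using q Q by (intro mult_right_mono mult_left_mono) auto
  also have "\<dots> \<le> real n * real n * (q * Q ^ 2) * (q * (1 + 2 * p))"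
    using mult_left_mono[OF one_le_one_minus_mult[OF p], of "real n * real n * (q * Q ^ 2)"] q Q
    by (simp add: q_def)
  also have "\<dots> = \<mu> ^ 2 * (1 + 2 * p)" by (simp add: \<mu> power2_eq_square)
  finally have "bernoulli_expect (all_edges n) p (\<lambda>E. real (card (vertices_of_degree n 0 E)) ^ 2)
      \<le> \<mu> ^ 2 + \<mu> + 2 * p * \<mu> ^ 2"
    unfolding expect_card_vertices_of_degree_sq
    by (simp add: binom_prob_def \<mu>_def q_def[symmetric] Q_def[symmetric] algebra_simps)
  moreover have "bernoulli_expect (all_edges n) p (\<lambda>E. real (card (vertices_of_degree n 0 E))) = \<mu>"
    by (simp add: expect_card_vertices_of_degree binom_prob_def \<mu>_def)
  ultimately show ?thesis using gnp_prob_less_half_mean[of p n _ \<mu> "2 * p"] p \<open>\<mu> > 0\<close> by simp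
qed

lemma expect_card_leaves:
  fixes p :: real
  assumes n: "3 \<le> n"
  defines "q \<equiv> 1 - p" and "R \<equiv> (1 - p) ^ (n - 3)"
  shows "bernoulli_expect (all_edges n) p (\<lambda>E. real (card (vertices_of_degree n 1 E))) =
      real n * (real n - 1) * p * q * R"
    and "bernoulli_expect (all_edges n) p (\<lambda>E. real (card (vertices_of_degree n 1 E)) ^ 2) =
      real n * (real n - 1) * p * q * R + real n * (real n - 1) * (q * ((real n - 2) * p * R) ^ 2) +
      real n * (real n - 1) * (p * (q * R) ^ 2)"
proof -
  have "n - 2 = Suc (n - 3)" using n by simp
  moreover have R: "R = q ^ (n - 3)" by (simp add: R_def q_def)
  ultimately have QR: "q ^ (n - 2) = q * R" by simp
  have nr: "real (n - 1) = real n - 1" "real (n - 2) = real n - 2" using n by (auto simp: of_nat_diff)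
  have e: "n - 1 - 1 = n - 2" "n - 2 - 1 = n - 3" by auto
  have binom: "binom_prob (n - 1) p 1 = (real n - 1) * p * (q * R)"
    "binom_prob (n - 2) p 1 = (real n - 2) * p * R" "binom_prob (n - 2) p 0 = q * R"
    unfolding binom_prob_def choose_one power_one_right e nr q_def[symmetric]
    by (simp_all add: QR R)
  show "bernoulli_expect (all_edges n) p (\<lambda>E. real (card (vertices_of_degree n 1 E))) =
      real n * (real n - 1) * p * q * R"
    unfolding expect_card_vertices_of_degree binom by (simp add: algebra_simps)
  show "bernoulli_expect (all_edges n) p (\<lambda>E. real (card (vertices_of_degree n 1 E)) ^ 2) =
      real n * (real n - 1) * p * q * R + real n * (real n - 1) * (q * ((real n - 2) * p * R) ^ 2) +
      real n * (real n - 1) * (p * (q * R) ^ 2)"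
    unfolding expect_card_vertices_of_degree_sq binom by (simp add: binom q_def algebra_simps)
qed

lemma gnp_prob_few_leaves:
  assumes n: "3 \<le> n" and p: "0 < p" "p \<le> 1/2"
  defines "\<mu> \<equiv> real n * (real n - 1) * p * (1 - p) ^ (n - 2)"
  shows "gnp_prob n p (\<lambda>E. real (card (vertices_of_degree n 1 E)) < \<mu> / 2)
    \<le> 4 / \<mu> + 8 * p + 4 / ((real n - 1) ^ 2 * p)"
proof -
  define q where "q = 1 - p"
  define R where "R = q ^ (n - 3)"
  have q: "0 < q" "q \<le> 1" and R: "R > 0" and nr: "real n \<ge> 3" using p n by (auto simp: q_def R_def)
  have "n - 2 = Suc (n - 3)" using n by simp
  then have \<mu>: "\<mu> = real n * (real n - 1) * p * q * R" and "\<mu> > 0"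
    using nr p q R unfolding \<mu>_def q_def[symmetric] R_def by simp_all
  note moments = expect_card_leaves[OF n, of p, folded q_def, folded R_def, folded \<mu>]
  have "real n * (real n - 1) * (q * ((real n - 2) * p * R) ^ 2) \<le> \<mu> ^ 2 * (1 + 2 * p)"
  proof -
    have "(real n - 2) ^ 2 \<le> real n * (real n - 1)" using nr by (simp add: power2_eq_square algebra_simps)
    then have "real n * (real n - 1) * (real n - 2) ^ 2 * (p * R) ^ 2 * q
        \<le> real n * (real n - 1) * (real n * (real n - 1)) * (p * R) ^ 2 * q"
      using nr q by (intro mult_right_mono mult_left_mono) auto
    then have "real n * (real n - 1) * (q * ((real n - 2) * p * R) ^ 2)
        \<le> (real n * (real n - 1)) ^ 2 * (p * R) ^ 2 * q * 1"
      by (simp add: power2_eq_square algebra_simps)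
    also have "\<dots> \<le> (real n * (real n - 1)) ^ 2 * (p * R) ^ 2 * q * (q * (1 + 2 * p))"
      using one_le_one_minus_mult[of p] p q nr by (intro mult_left_mono) (auto simp: q_def)
    also have "\<dots> = \<mu> ^ 2 * (1 + 2 * p)" by (simp add: \<mu> power2_eq_square)
    finally show ?thesis .
  qed
  moreover have "real n * (real n - 1) * (p * (q * R) ^ 2) \<le> \<mu> ^ 2 * (1 / ((real n - 1) ^ 2 * p))"
  proof -
    have "real n * (real n - 1) * (p * (q * R) ^ 2) \<le> real n * real n * (p * (q * R) ^ 2)"
      using nr p by (intro mult_right_mono mult_left_mono) auto
    moreover have "\<mu> ^ 2 = real n * real n * (p * (q * R) ^ 2) * ((real n - 1) ^ 2 * p)"
      by (simp add: \<mu> power2_eq_square algebra_simps)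
    moreover have "(real n - 1) ^ 2 * p \<noteq> 0" using nr p by simp
    ultimately show ?thesis by simp
  qed
  ultimately have "gnp_prob n p (\<lambda>E. real (card (vertices_of_degree n 1 E)) < \<mu> / 2)
      \<le> 4 / \<mu> + 4 * (2 * p + 1 / ((real n - 1) ^ 2 * p))"
    using p \<open>\<mu> > 0\<close> moments by (intro gnp_prob_less_half_mean) (auto simp: algebra_simps)
  then show ?thesis by simp
qed

lemma gnp_prob_many_isolated_edges:
  assumes n: "3 \<le> n" and p: "0 < p" "p \<le> 1/2"
  defines "\<mu> \<equiv> real n * (real n - 1) * p * (1 - p) ^ (n - 2)"
  shows "gnp_prob n p (\<lambda>E. \<mu> / 4 \<le> isolated_edge_count n E) \<le> 4 * (1 - p) ^ (n - 2)"
proof -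
  have "\<mu> > 0" using n p by (simp add: \<mu>_def)
  have "0 \<le> isolated_edge_count n E" for E unfolding isolated_edge_count_def by (intro sum_nonneg) auto
  then have "gnp_prob n p (\<lambda>E. \<mu> / 4 \<le> isolated_edge_count n E)
      \<le> bernoulli_expect (all_edges n) p (isolated_edge_count n) / (\<mu> / 4)"
    using p \<open>\<mu> > 0\<close> by (intro gnp_prob_markov) auto
  also have "bernoulli_expect (all_edges n) p (isolated_edge_count n) = \<mu> * (1 - p) ^ (n - 2)"
    unfolding expect_isolated_edge_count \<mu>_def by (simp add: power2_eq_square)
  finally show ?thesis using \<open>\<mu> > 0\<close> by simp
qed

lemma exp_le_one_minus_power:
  assumes "0 \<le> p" "p \<le> 1/2"
  shows "exp (- (real j * (p + 2 * p ^ 2))) \<le> (1 - p) ^ j"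
proof -
  have "real j * (- p - 2 * p\<^sup>2) \<le> real j * ln (1 - p)"
    using ln_one_minus_pos_lower_bound[OF assms] by (intro mult_left_mono) auto
  then have "exp (- (real j * (p + 2 * p ^ 2))) \<le> exp (real j * ln (1 - p))"
    by (simp add: algebra_simps)
  also have "\<dots> = (1 - p) ^ j" using assms by (simp add: exp_of_nat_mult)
  finally show ?thesis .
qed

lemma one_minus_power_le_exp:
  assumes "0 \<le> p" "p \<le> 1"
  shows "(1 - p) ^ j \<le> exp (- (real j * p))"
proof -
  have "(1 - p) ^ j \<le> exp (- p) ^ j"
    using assms exp_ge_add_one_self[of "-p"] by (intro power_mono) auto
  also have "\<dots> = exp (- (real j * p))" by (simp add: exp_of_nat_mult[symmetric])
  finally show ?thesis .
qed

lemma one_le_ln: "3 \<le> n \<Longrightarrow> 1 \<le> ln (real n)"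
  using exp_le ln_ge_iff[of "real n" 1] by simp

lemma exp_neg_mult_ln: "3 \<le> n \<Longrightarrow> exp (- (a * ln (real n))) = 1 / real n powr a"
  by (simp add: powr_def exp_minus field_simps)

lemma exp_neg_threshold:
  assumes "3 \<le> n"
  shows "exp (- (ln (real n) + ln (ln (real n)) - w)) = exp w / (real n * ln (real n))"
  using assms one_le_ln[OF assms] by (simp add: exp_diff exp_add exp_minus field_simps)

lemma mean_leaves_ge:
  assumes n: "3 \<le> n" and p: "0 \<le> p" "p \<le> 1/4" "4 * p * (p * real n) \<le> 1"
  shows "(real n - 1) * (p * real n) * exp (- (p * real n)) / 2 \<le> real n * (real n - 1) * p * (1 - p) ^ (n - 2)"
proof -
  let ?x = "p * real n"
  have "real (n - 2) * (p + 2 * p ^ 2) \<le> real n * (p + 2 * p ^ 2)"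
    using p by (intro mult_right_mono) auto
  also have "\<dots> = ?x + 2 * p * ?x" by (simp add: power2_eq_square algebra_simps)
  finally have "real (n - 2) * (p + 2 * p ^ 2) \<le> ?x + 2 * p * ?x" .
  then have "exp (- (?x + 2 * p * ?x)) \<le> exp (- (real (n - 2) * (p + 2 * p ^ 2)))" by simp
  also have "\<dots> \<le> (1 - p) ^ (n - 2)" using p by (intro exp_le_one_minus_power) auto
  finally have "exp (- ?x) * exp (- (2 * p * ?x)) \<le> (1 - p) ^ (n - 2)" by (simp add: exp_add[symmetric])
  moreover have "1 / 2 \<le> exp (- (2 * p * ?x))"
    using exp_ge_add_one_self[of "- (2 * p * ?x)"] p(3) by linarith
  then have "exp (- ?x) / 2 \<le> exp (- ?x) * exp (- (2 * p * ?x))"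
    using mult_left_mono[of "1/2" _ "exp (- ?x)"] by simp
  ultimately have "exp (- ?x) / 2 \<le> (1 - p) ^ (n - 2)" by linarith
  then have "(real n - 1) * ?x * (exp (- ?x) / 2) \<le> (real n - 1) * ?x * (1 - p) ^ (n - 2)"
    using n p by (intro mult_left_mono) auto
  moreover have "(real n - 1) * ?x * (1 - p) ^ (n - 2) = real n * (real n - 1) * p * (1 - p) ^ (n - 2)"
    by (simp add: algebra_simps)
  ultimately show ?thesis by simp
qed

lemma mean_leaves_ge_threshold:
  assumes n: "3 \<le> n" and p: "0 \<le> p" "p \<le> 1/4" "4 * p * (p * real n) \<le> 1"
    and x: "p * real n \<le> ln (real n) + ln (ln (real n)) - w"
  shows "p * real n / ln (real n) * exp w / 4 \<le> real n * (real n - 1) * p * (1 - p) ^ (n - 2)"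
proof -
  let ?x = "p * real n"
  have n2: "real n / 2 \<le> real n - 1" and l: "1 \<le> ln (real n)" using n one_le_ln[OF n] by auto
  have "exp w / (real n * ln (real n)) \<le> exp (- ?x)"
    using x exp_neg_threshold[OF n, of w] by (metis exp_le_cancel_iff neg_le_iff_le)
  then have "(real n / 2) * ?x * (exp w / (real n * ln (real n))) / 2 \<le> (real n - 1) * ?x * exp (- ?x) / 2"
    using n2 p n by (intro divide_right_mono mult_mono) auto
  also have "(real n / 2) * ?x * (exp w / (real n * ln (real n))) / 2 = ?x / ln (real n) * exp w / 4"
    using n l by (simp add: field_simps)
  finally show ?thesis using mean_leaves_ge[OF n p] by linarith
qed

lemma mean_isolated_ge:
  assumes n: "3 \<le> n" and p: "0 \<le> p" "p \<le> 1/4" and x: "p * real n \<le> ln (real n) / 4"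
  shows "real n powr (5/8) \<le> real n * (1 - p) ^ (n - 1)"
proof -
  have "real (n - 1) * (p + 2 * p ^ 2) \<le> real n * (p + 2 * p ^ 2)"
    using p by (intro mult_right_mono) auto
  also have "\<dots> = (p * real n) * (1 + 2 * p)" by (simp add: power2_eq_square algebra_simps)
  also have "\<dots> \<le> (ln (real n) / 4) * (3 / 2)"
    using x p one_le_ln[OF n] by (intro mult_mono) auto
  finally have "exp (- ((3/8) * ln (real n))) \<le> exp (- (real (n - 1) * (p + 2 * p ^ 2)))" by simp
  also have "\<dots> \<le> (1 - p) ^ (n - 1)" using p by (intro exp_le_one_minus_power) auto
  finally have "real n * (1 / real n powr (3/8)) \<le> real n * (1 - p) ^ (n - 1)"
    unfolding exp_neg_mult_ln[OF n] by (intro mult_left_mono) auto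
  moreover have "real n powr (5/8) = real n * (1 / real n powr (3/8))"
    using n powr_add[of "real n" "5/8" "3/8"] by (simp add: field_simps)
  ultimately show ?thesis by simp
qed

lemma mean_leaves_ge_min:
  assumes n: "3 \<le> n" and p: "0 \<le> p" "p \<le> 1/4" "4 * p * (p * real n) \<le> 1"
    and x: "p * real n \<le> ln (real n) + ln (ln (real n)) - w"
  shows "min (min (p * real n ^ 2 / 12) (sqrt (real n) / 4)) (exp w / 8)
    \<le> real n * (real n - 1) * p * (1 - p) ^ (n - 2)"
    (is "?\<Lambda> \<le> ?\<mu>")
proof -
  let ?x = "p * real n"
  have n2: "real n / 2 \<le> real n - 1" using n by simp
  have "(real n / 2) * (?x * exp (- ?x)) \<le> (real n - 1) * (?x * exp (- ?x))"
    using n2 p by (intro mult_right_mono) auto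
  then have lower: "(real n / 2) * ?x * exp (- ?x) / 2 \<le> ?\<mu>"
    using mean_leaves_ge[OF n p] by (simp add: mult.assoc)
  consider "?x \<le> 1" | "1 < ?x" "?x \<le> ln (real n) / 2" | "ln (real n) / 2 < ?x" by linarith
  then show ?thesis
  proof cases
    case 1
    then have "exp (-1) \<le> exp (- ?x)" by simp
    moreover have "1 / 3 \<le> exp (-1::real)" using exp_le by (simp add: exp_minus field_simps)
    ultimately have "1 / 3 \<le> exp (- ?x)" by linarith
    then have "(real n / 2) * ?x * (1/3) / 2 \<le> (real n / 2) * ?x * exp (- ?x) / 2"
      using p n by (intro divide_right_mono mult_left_mono) auto
    then show ?thesis using lower by (simp add: power2_eq_square)
  next
    case 2
    then have "exp (- ((1/2) * ln (real n))) \<le> exp (- ?x)" by simp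
    then have "1 / sqrt (real n) \<le> exp (- ?x)"
      unfolding exp_neg_mult_ln[OF n] using n by (simp add: powr_half_sqrt)
    also have "\<dots> \<le> ?x * exp (- ?x)" using 2 by simp
    finally have "1 / sqrt (real n) \<le> ?x * exp (- ?x)" .
    then have "(real n / 2) * (1 / sqrt (real n)) / 2 \<le> (real n / 2) * (?x * exp (- ?x)) / 2"
      using n by (intro divide_right_mono mult_left_mono) auto
    moreover have "(real n / 2) * (1 / sqrt (real n)) / 2 = sqrt (real n) / 4"
      using n by (simp add: field_simps real_div_sqrt)
    ultimately show ?thesis using lower by (simp add: mult.assoc)
  next
    case 3
    then have "ln (real n) / 2 / ln (real n) * exp w / 4 \<le> ?x / ln (real n) * exp w / 4"
      using one_le_ln[OF n] by (intro divide_right_mono mult_right_mono) auto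
    moreover have "ln (real n) / 2 / ln (real n) * exp w / 4 = exp w / 8" using one_le_ln[OF n] by simp
    ultimately have "exp w / 8 \<le> ?\<mu>" using mean_leaves_ge_threshold[OF n p x] by linarith
    then show ?thesis by (simp add: min_le_iff_disj)
  qed
qed

section \<open>Few domination pairs are unlikely\<close>

lemma sq_div_4_le_sq_minus_1:
  assumes "2 \<le> n"
  shows "real n ^ 2 / 4 \<le> (real n - 1) ^ 2"
proof -
  have "0 \<le> (3 * real n - 2) * (real n - 2)" using assms by (intro mult_nonneg_nonneg) auto
  then show ?thesis by (simp add: power2_eq_square field_simps)
qed

lemma gnp_prob_few_nonadj_dom_pairs_sparse:
  assumes n: "3 \<le> n" and p: "0 \<le> p" "p \<le> 1/4" and x: "p * real n \<le> ln (real n) / 4"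
    and \<Lambda>: "0 < \<Lambda>" "\<Lambda> \<le> real n powr (5/8)"
  shows "gnp_prob n p (\<lambda>E. real (card (nonadj_dom_pairs n E)) < \<Lambda> / 4) \<le> 4 / \<Lambda> + 8 * p"
proof -
  define \<mu> where "\<mu> = real n * (1 - p) ^ (n - 1)"
  have "\<Lambda> \<le> \<mu>" using mean_isolated_ge[OF n p x] \<Lambda> unfolding \<mu>_def by linarith
  have "gnp_prob n p (\<lambda>E. real (card (nonadj_dom_pairs n E)) < \<Lambda> / 4)
      \<le> gnp_prob n p (\<lambda>E. real (card (vertices_of_degree n 0 E)) < \<mu> / 2)"
  proof (rule gnp_prob_mono)
    fix E assume "real (card (nonadj_dom_pairs n E)) < \<Lambda> / 4"
    moreover have "card (vertices_of_degree n 0 E) \<le> card (nonadj_dom_pairs n E)"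
      using n by (intro card_isolated_vertices_le) auto
    ultimately show "real (card (vertices_of_degree n 0 E)) < \<mu> / 2" using \<open>\<Lambda> \<le> \<mu>\<close> \<Lambda> by linarith
  qed (use p in auto)
  also have "\<dots> \<le> 4 / \<mu> + 8 * p" unfolding \<mu>_def using n p by (intro gnp_prob_few_isolated_vertices) auto
  also have "4 / \<mu> \<le> 4 / \<Lambda>" using \<open>\<Lambda> \<le> \<mu>\<close> \<Lambda> by (intro divide_left_mono) auto
  finally show ?thesis by simp
qed

lemma exp_half_le_2: "exp (1/2 :: real) \<le> 2"
proof -
  have "exp (1/2 :: real) ^ 2 = exp 1" by (simp add: exp_of_nat_mult[symmetric])
  also have "\<dots> \<le> 2 ^ 2" using exp_le by simp
  finally show ?thesis by (rule power2_le_imp_le) simp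
qed

lemma one_minus_power_le_root4:
  assumes n: "3 \<le> n" and p: "0 \<le> p" "p \<le> 1/4" and x: "ln (real n) / 4 < p * real n"
  shows "(1 - p) ^ (n - 2) \<le> 2 / real n powr (1/4)"
proof -
  have "(1 - p) ^ (n - 2) \<le> exp (- (real (n - 2) * p))" using p by (intro one_minus_power_le_exp) auto
  also have "\<dots> = exp (- (p * real n)) * exp (2 * p)"
    using n by (simp add: of_nat_diff exp_add[symmetric] algebra_simps)
  also have "\<dots> \<le> exp (- ((1/4) * ln (real n))) * 2"
  proof (rule mult_mono)
    have "exp (2 * p) \<le> exp (1/2)" using p by simp
    then show "exp (2 * p) \<le> 2" using exp_half_le_2 by linarith
  qed (use x in auto)
  finally show ?thesis unfolding exp_neg_mult_ln[OF n] by simp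
qed

lemma gnp_prob_few_nonadj_dom_pairs_dense:
  assumes n: "3 \<le> n" and p: "0 \<le> p" "p \<le> 1/4" "4 * p * (p * real n) \<le> 1"
    and x: "ln (real n) / 4 < p * real n" "p * real n \<le> ln (real n) + ln (ln (real n)) - w"
    and \<Lambda>: "0 < \<Lambda>" "\<Lambda> \<le> exp w / 16"
  shows "gnp_prob n p (\<lambda>E. real (card (nonadj_dom_pairs n E)) < \<Lambda> / 4)
    \<le> 4 / \<Lambda> + 8 * p + 64 / real n + 8 / real n powr (1/4)"
proof -
  define \<mu> where "\<mu> = real n * (real n - 1) * p * (1 - p) ^ (n - 2)"
  have l: "1 \<le> ln (real n)" and nr: "3 \<le> real n" using one_le_ln[OF n] n by auto
  have "1 / (4 * real n) \<le> p" using x(1) l nr by (simp add: field_simps)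
  moreover have "0 < 1 / (4 * real n)" using nr by simp
  ultimately have "0 < p" by linarith
  have "exp w / 16 \<le> p * real n / ln (real n) * exp w / 4"
    using x(1) l by (simp add: field_simps mult_right_mono)
  then have "\<Lambda> \<le> \<mu>" using mean_leaves_ge_threshold[OF n p x(2)] \<Lambda> unfolding \<mu>_def by linarith
  have "gnp_prob n p (\<lambda>E. real (card (nonadj_dom_pairs n E)) < \<Lambda> / 4)
      \<le> gnp_prob n p (\<lambda>E. real (card (vertices_of_degree n 1 E)) < \<mu> / 2 \<or> \<mu> / 4 \<le> isolated_edge_count n E)"
  proof (rule gnp_prob_mono)
    fix E assume "real (card (nonadj_dom_pairs n E)) < \<Lambda> / 4"
    then show "real (card (vertices_of_degree n 1 E)) < \<mu> / 2 \<or> \<mu> / 4 \<le> isolated_edge_count n E"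
      using card_leaves_le_nonadj_dom_pairs[of n E] \<open>\<Lambda> \<le> \<mu>\<close> by linarith
  qed (use p in auto)
  also have "\<dots> \<le> gnp_prob n p (\<lambda>E. real (card (vertices_of_degree n 1 E)) < \<mu> / 2) +
      gnp_prob n p (\<lambda>E. \<mu> / 4 \<le> isolated_edge_count n E)"
    using p by (intro gnp_prob_disj_le) auto
  also have "gnp_prob n p (\<lambda>E. real (card (vertices_of_degree n 1 E)) < \<mu> / 2) \<le> 4 / \<Lambda> + 8 * p + 64 / real n"
  proof -
    have "real n ^ 2 / 4 * (1 / (4 * real n)) \<le> (real n - 1) ^ 2 * p"
      using sq_div_4_le_sq_minus_1[of n] n \<open>1 / (4 * real n) \<le> p\<close> by (intro mult_mono) auto
    then have "real n / 16 \<le> (real n - 1) ^ 2 * p" using nr by (simp add: power2_eq_square)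
    then have "4 / ((real n - 1) ^ 2 * p) \<le> 4 / (real n / 16)" using nr by (intro divide_left_mono) auto
    moreover have "4 / \<mu> \<le> 4 / \<Lambda>" using \<open>\<Lambda> \<le> \<mu>\<close> \<Lambda> by (intro divide_left_mono) auto
    ultimately show ?thesis
      using gnp_prob_few_leaves[OF n \<open>0 < p\<close>, folded \<mu>_def] p by simp
  qed
  also have "gnp_prob n p (\<lambda>E. \<mu> / 4 \<le> isolated_edge_count n E) \<le> 8 / real n powr (1/4)"
    using gnp_prob_many_isolated_edges[OF n \<open>0 < p\<close>] one_minus_power_le_root4[OF n p(1,2) x(1)] p
    unfolding \<mu>_def by simp
  finally show ?thesis by simp
qed

lemma gnp_prob_few_nonadj_dom_pairs:
  assumes n: "3 \<le> n" and p: "0 \<le> p" "p \<le> 1/4" "4 * p * (p * real n) \<le> 1"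
    and x: "p * real n \<le> ln (real n) + ln (ln (real n)) - w"
    and \<Lambda>: "0 < \<Lambda>" "\<Lambda> \<le> real n powr (5/8)" "\<Lambda> \<le> exp w / 16"
  shows "gnp_prob n p (\<lambda>E. real (card (nonadj_dom_pairs n E)) < \<Lambda> / 4)
    \<le> 4 / \<Lambda> + 8 * p + 64 / real n + 8 / real n powr (1/4)"
proof (cases "p * real n \<le> ln (real n) / 4")
  case True
  moreover have "0 \<le> 64 / real n + 8 / real n powr (1/4)" by simp
  ultimately show ?thesis using gnp_prob_few_nonadj_dom_pairs_sparse[OF n p(1,2) True \<Lambda>(1,2)] by linarith
next
  case False
  then show ?thesis using gnp_prob_few_nonadj_dom_pairs_dense[OF n p _ x \<Lambda>(1,3)] by simp
qed

lemma gnp_prob_few_adj_dom_pairs: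
  assumes n: "3 \<le> n" and p: "0 < p" "p \<le> 1/4" "4 * p * (p * real n) \<le> 1"
    and x: "p * real n \<le> ln (real n) + ln (ln (real n)) - w"
    and \<Lambda>: "0 < \<Lambda>" "\<Lambda> \<le> min (min (p * real n ^ 2 / 12) (sqrt (real n) / 4)) (exp w / 8)"
  shows "gnp_prob n p (\<lambda>E. real (card (adj_dom_pairs n E)) < \<Lambda> / 2) \<le> 4 / \<Lambda> + 8 * p + 16 / (p * real n ^ 2)"
proof -
  define \<mu> where "\<mu> = real n * (real n - 1) * p * (1 - p) ^ (n - 2)"
  have nr: "3 \<le> real n" using n by simp
  have "\<Lambda> \<le> \<mu>" using mean_leaves_ge_min[OF n _ p(2,3) x] p \<Lambda> unfolding \<mu>_def by linarith
  have "gnp_prob n p (\<lambda>E. real (card (adj_dom_pairs n E)) < \<Lambda> / 2)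
      \<le> gnp_prob n p (\<lambda>E. real (card (vertices_of_degree n 1 E)) < \<mu> / 2)"
  proof (rule gnp_prob_mono)
    fix E assume "real (card (adj_dom_pairs n E)) < \<Lambda> / 2"
    then show "real (card (vertices_of_degree n 1 E)) < \<mu> / 2"
      using card_leaves_le_adj_dom_pairs[of n E] \<open>\<Lambda> \<le> \<mu>\<close> by linarith
  qed (use p in auto)
  also have "\<dots> \<le> 4 / \<mu> + 8 * p + 4 / ((real n - 1) ^ 2 * p)"
    unfolding \<mu>_def using n p by (intro gnp_prob_few_leaves) auto
  also have "4 / \<mu> \<le> 4 / \<Lambda>" using \<open>\<Lambda> \<le> \<mu>\<close> \<Lambda> by (intro divide_left_mono) auto
  also have "4 / ((real n - 1) ^ 2 * p) \<le> 4 / (real n ^ 2 / 4 * p)"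
    using sq_div_4_le_sq_minus_1[of n] n p nr by (intro divide_left_mono mult_right_mono) auto
  finally show ?thesis by (simp add: field_simps)
qed

section \<open>Asymptotics\<close>

lemma filterlim_at_top_min:
  assumes "filterlim f at_top F" "filterlim g at_top F"
  shows "filterlim (\<lambda>x. min (f x) (g x) :: real) at_top F"
  unfolding filterlim_at_top
proof
  fix Z :: real
  show "\<forall>\<^sub>F x in F. Z \<le> min (f x) (g x)"
    using assms[unfolded filterlim_at_top] by (simp add: eventually_conj_iff)
qed

lemma aas_if_unlikely_below:
  fixes X :: "nat \<Rightarrow> nat set set \<Rightarrow> real"
  assumes p: "\<And>n. 0 \<le> p n \<and> p n \<le> 1"
    and bound: "\<forall>\<^sub>F n in sequentially. C \<le> \<Lambda> n \<and> gnp_prob n (p n) (\<lambda>E. X n E < \<Lambda> n) \<le> e n"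
    and e: "e \<longlonglongrightarrow> 0"
  shows "aas p (\<lambda>n E. C \<le> X n E)"
  unfolding aas_def
proof (rule tendsto_sandwich[where f = "\<lambda>n. 1 - e n" and h = "\<lambda>_. 1"])
  show "\<forall>\<^sub>F n in sequentially. 1 - e n \<le> gnp_prob n (p n) (\<lambda>E. C \<le> X n E)"
    using bound
  proof eventually_elim
    case (elim n)
    have "1 - gnp_prob n (p n) (\<lambda>E. X n E < \<Lambda> n) = gnp_prob n (p n) (\<lambda>E. \<not> X n E < \<Lambda> n)"
      by (simp add: gnp_prob_not)
    also have "\<dots> \<le> gnp_prob n (p n) (\<lambda>E. C \<le> X n E)"
      using p[of n] elim by (intro gnp_prob_mono) auto
    finally show ?case using elim by linarith
  qed
  show "\<forall>\<^sub>F n in sequentially. gnp_prob n (p n) (\<lambda>E. C \<le> X n E) \<le> 1"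
    using p by (intro always_eventually allI gnp_prob_le_1) auto
  show "(\<lambda>n. 1 - e n) \<longlonglongrightarrow> 1" using tendsto_diff[OF tendsto_const e, of 1] by simp
qed simp

lemma eventually_below_threshold:
  assumes p: "\<And>n. 0 \<le> p n \<and> p n \<le> 1" and \<omega>: "filterlim \<omega> at_top sequentially"
    and below: "\<forall>\<^sub>F n in sequentially. p n < (ln (real n) + ln (ln (real n)) - \<omega> n) / real n"
  shows "\<forall>\<^sub>F n in sequentially. 3 \<le> n \<and> p n * real n \<le> ln (real n) + ln (ln (real n)) - \<omega> n
     \<and> p n \<le> 2 * (ln (real n) / real n) \<and> 4 * p n * (p n * real n) \<le> 1 \<and> p n \<le> 1/4"
proof -
  have "\<forall>\<^sub>F n in sequentially. ln (real n) / real n < 1/8" by real_asymp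
  moreover have "\<forall>\<^sub>F n in sequentially. ln (real n) ^ 2 / real n < 1/16" by real_asymp
  moreover have "\<forall>\<^sub>F n in sequentially. 0 \<le> \<omega> n" using \<omega> by (simp add: filterlim_at_top)
  ultimately show ?thesis using eventually_ge_at_top[of 3] below
  proof eventually_elim
    case (elim n)
    have nr: "real n \<ge> 3" and l: "1 \<le> ln (real n)" using elim one_le_ln by auto
    have x: "p n * real n \<le> ln (real n) + ln (ln (real n)) - \<omega> n"
      using elim(5) nr by (simp add: field_simps)
    have "ln (ln (real n)) \<le> ln (real n) - 1" using l by (intro ln_le_minus_one) simp
    then have x2: "p n * real n \<le> 2 * ln (real n)" using x elim(3) by linarith
    then have p2: "p n \<le> 2 * (ln (real n) / real n)" using nr by (simp add: field_simps)
    have "4 * p n * (p n * real n) \<le> 4 * (2 * (ln (real n) / real n)) * (2 * ln (real n))"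
      using p2 x2 p[of n] l nr by (rule_tac mult_mono) auto
    also have "\<dots> = 16 * (ln (real n) ^ 2 / real n)" by (simp add: power2_eq_square)
    also have "\<dots> \<le> 1" using elim(2) by linarith
    finally show ?case using elim(1,4) x p2 by linarith
  qed
qed

lemma tendsto_0_below_threshold:
  assumes p: "\<And>n. 0 \<le> p n \<and> p n \<le> 1"
    and below: "\<forall>\<^sub>F n in sequentially. p n \<le> 2 * (ln (real n) / real n)"
  shows "p \<longlonglongrightarrow> 0"
proof (rule tendsto_sandwich[where f = "\<lambda>_. 0" and h = "\<lambda>n. 2 * (ln (real n) / real n)"])
  show "(\<lambda>n. 2 * (ln (real n) / real n)) \<longlonglongrightarrow> 0" by real_asymp
qed (use p below in auto)

lemma filterlim_at_top_divide_const:
  fixes f :: "'a \<Rightarrow> real"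
  assumes "filterlim f at_top F" "0 < c"
  shows "filterlim (\<lambda>x. f x / c) at_top F"
  using filterlim_tendsto_pos_mult_at_top[OF tendsto_const[of "1 / c"] _ assms(1)] assms(2) by simp

lemma aas_many_nonadj_dom_pairs:
  assumes p: "\<And>n. 0 \<le> p n \<and> p n \<le> 1" and \<omega>: "filterlim \<omega> at_top sequentially"
    and below: "\<forall>\<^sub>F n in sequentially. p n < (ln (real n) + ln (ln (real n)) - \<omega> n) / real n"
  shows "aas p (\<lambda>n E. C \<le> real (card (nonadj_dom_pairs n E)))"
proof -
  define \<Lambda> where "\<Lambda> n = min (real n powr (5/8)) (exp (\<omega> n) / 16)" for n
  define e where "e n = 4 / \<Lambda> n + 8 * p n + 64 / real n + 8 / real n powr (1/4)" for n
  have \<Lambda>: "filterlim \<Lambda> at_top sequentially"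
    unfolding \<Lambda>_def using filterlim_compose[OF exp_at_top \<omega>]
    by (intro filterlim_at_top_min filterlim_at_top_divide_const) (real_asymp, auto)
  note threshold = eventually_below_threshold[OF p \<omega> below]
  have "p \<longlonglongrightarrow> 0" using threshold by (intro tendsto_0_below_threshold[OF p]) (auto elim: eventually_mono)
  then have "(\<lambda>n. 8 * p n) \<longlonglongrightarrow> 0" by (rule tendsto_mult_right_zero)
  moreover have "(\<lambda>n. 4 / \<Lambda> n) \<longlonglongrightarrow> 0"
    using tendsto_mult_right_zero[OF tendsto_inverse_0_at_top[OF \<Lambda>], of 4] by (simp add: divide_inverse)
  moreover have "(\<lambda>n. 64 / real n) \<longlonglongrightarrow> 0" "(\<lambda>n. 8 / real n powr (1/4)) \<longlonglongrightarrow> 0" by real_asymp+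
  ultimately have "e \<longlonglongrightarrow> 0 + 0 + 0 + 0" unfolding e_def by (intro tendsto_add)
  then have "e \<longlonglongrightarrow> 0" by simp
  moreover have "\<forall>\<^sub>F n in sequentially. C \<le> \<Lambda> n / 4 \<and>
      gnp_prob n (p n) (\<lambda>E. real (card (nonadj_dom_pairs n E)) < \<Lambda> n / 4) \<le> e n"
    using threshold \<Lambda>[unfolded filterlim_at_top, rule_format, of "max (4 * C) 1"]
  proof eventually_elim
    case (elim n)
    then have "0 < \<Lambda> n" "\<Lambda> n \<le> real n powr (5/8)" "\<Lambda> n \<le> exp (\<omega> n) / 16"
      by (auto simp: \<Lambda>_def)
    then show ?case using elim p[of n] gnp_prob_few_nonadj_dom_pairs[of n "p n" "\<omega> n" "\<Lambda> n"]
      unfolding e_def by auto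
  qed
  ultimately show ?thesis by (intro aas_if_unlikely_below[OF p])
qed

lemma aas_many_adj_dom_pairs:
  assumes p: "\<And>n. 0 \<le> p n \<and> p n \<le> 1" and \<omega>: "filterlim \<omega> at_top sequentially"
    and below: "\<forall>\<^sub>F n in sequentially. p n < (ln (real n) + ln (ln (real n)) - \<omega> n) / real n"
    and pn2: "filterlim (\<lambda>n. p n * real n ^ 2) at_top sequentially"
  shows "aas p (\<lambda>n E. C \<le> real (card (adj_dom_pairs n E)))"
proof -
  define \<Lambda> where "\<Lambda> n = min (min (p n * real n ^ 2 / 12) (sqrt (real n) / 4)) (exp (\<omega> n) / 8)" for n
  define e where "e n = 4 / \<Lambda> n + 8 * p n + 16 / (p n * real n ^ 2)" for n
  have \<Lambda>: "filterlim \<Lambda> at_top sequentially"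
    unfolding \<Lambda>_def using filterlim_compose[OF exp_at_top \<omega>]
    by (intro filterlim_at_top_min filterlim_at_top_divide_const pn2) (auto, real_asymp)
  note threshold = eventually_below_threshold[OF p \<omega> below]
  have "p \<longlonglongrightarrow> 0" using threshold by (intro tendsto_0_below_threshold[OF p]) (auto elim: eventually_mono)
  then have "(\<lambda>n. 8 * p n) \<longlonglongrightarrow> 0" by (rule tendsto_mult_right_zero)
  moreover have "(\<lambda>n. 4 / \<Lambda> n) \<longlonglongrightarrow> 0"
    using tendsto_mult_right_zero[OF tendsto_inverse_0_at_top[OF \<Lambda>], of 4] by (simp add: divide_inverse)
  moreover have "(\<lambda>n. 16 / (p n * real n ^ 2)) \<longlonglongrightarrow> 0"
    using tendsto_mult_right_zero[OF tendsto_inverse_0_at_top[OF pn2], of 16] by (simp add: divide_inverse)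
  ultimately have "e \<longlonglongrightarrow> 0 + 0 + 0" unfolding e_def by (intro tendsto_add)
  then have "e \<longlonglongrightarrow> 0" by simp
  moreover have "\<forall>\<^sub>F n in sequentially. C \<le> \<Lambda> n / 2 \<and>
      gnp_prob n (p n) (\<lambda>E. real (card (adj_dom_pairs n E)) < \<Lambda> n / 2) \<le> e n"
    using threshold \<Lambda>[unfolded filterlim_at_top, rule_format, of "max (2 * C) 1"]
  proof eventually_elim
    case (elim n)
    then have "0 < \<Lambda> n" by simp
    moreover have "0 < p n"
      using \<open>0 < \<Lambda> n\<close> elim unfolding \<Lambda>_def by (auto simp: zero_less_mult_iff)
    ultimately show ?case using elim gnp_prob_few_adj_dom_pairs[of n "p n" "\<omega> n" "\<Lambda> n"]
      unfolding e_def \<Lambda>_def by auto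
  qed
  ultimately show ?thesis by (intro aas_if_unlikely_below[OF p])
qed

theorem proposition2p7:
  fixes C :: real and p :: "nat \<Rightarrow> real"
  assumes "C > 0"
    and "\<And>n. 0 \<le> p n \<and> p n \<le> 1"
  shows
    "((\<exists>\<omega> :: nat \<Rightarrow> real. filterlim \<omega> at_top sequentially \<and>
        (\<forall>\<^sub>F n in sequentially. p n < (ln (real n) + ln (ln (real n)) - \<omega> n) / real n))
      \<longrightarrow> aas p (\<lambda>n E. real (card (nonadj_dom_pairs n E)) \<ge> C)
        \<and> (filterlim (\<lambda>n. p n * (real n)^2) at_top sequentially
            \<longrightarrow> aas p (\<lambda>n E. real (card (adj_dom_pairs n E)) \<ge> C)))
   \<and> ((\<exists>\<omega> :: nat \<Rightarrow> real. filterlim \<omega> at_top sequentially \<and>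
        (\<forall>\<^sub>F n in sequentially. 1 - p n < (ln (real n) + ln (ln (real n)) - \<omega> n) / real n))
      \<longrightarrow> aas p (\<lambda>n E. real (card (adj_dom_pairs n E)) \<ge> C)
        \<and> (filterlim (\<lambda>n. (1 - p n) * p n * (real n)^2) at_top sequentially
            \<longrightarrow> aas p (\<lambda>n E. real (card (nonadj_dom_pairs n E)) \<ge> C)))"
proof (intro conjI impI)
  assume "\<exists>\<omega> :: nat \<Rightarrow> real. filterlim \<omega> at_top sequentially \<and>
      (\<forall>\<^sub>F n in sequentially. p n < (ln (real n) + ln (ln (real n)) - \<omega> n) / real n)"
  then obtain \<omega> :: "nat \<Rightarrow> real" where \<omega>: "filterlim \<omega> at_top sequentially"
    and below: "\<forall>\<^sub>F n in sequentially. p n < (ln (real n) + ln (ln (real n)) - \<omega> n) / real n" by blast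
  show "aas p (\<lambda>n E. real (card (nonadj_dom_pairs n E)) \<ge> C)"
    by (rule aas_many_nonadj_dom_pairs[OF assms(2) \<omega> below])
  assume "filterlim (\<lambda>n. p n * (real n)^2) at_top sequentially"
  then show "aas p (\<lambda>n E. real (card (adj_dom_pairs n E)) \<ge> C)"
    by (rule aas_many_adj_dom_pairs[OF assms(2) \<omega> below])
next
  define q where "q n = 1 - p n" for n
  have q: "0 \<le> q n \<and> q n \<le> 1" for n using assms(2)[of n] by (simp add: q_def)
  have p_q: "p = (\<lambda>n. 1 - q n)" by (simp add: q_def)
  assume "\<exists>\<omega> :: nat \<Rightarrow> real. filterlim \<omega> at_top sequentially \<and>
      (\<forall>\<^sub>F n in sequentially. 1 - p n < (ln (real n) + ln (ln (real n)) - \<omega> n) / real n)"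
  then obtain \<omega> :: "nat \<Rightarrow> real" where \<omega>: "filterlim \<omega> at_top sequentially"
    and below: "\<forall>\<^sub>F n in sequentially. q n < (ln (real n) + ln (ln (real n)) - \<omega> n) / real n"
    unfolding q_def by blast
  show "aas p (\<lambda>n E. real (card (adj_dom_pairs n E)) \<ge> C)"
    unfolding p_q aas_one_minus_adj_dom_pairs by (rule aas_many_nonadj_dom_pairs[OF q \<omega> below])
  assume "filterlim (\<lambda>n. (1 - p n) * p n * (real n)^2) at_top sequentially"
  moreover have "(1 - p n) * p n * (real n)^2 \<le> q n * (real n)^2" for n
    using assms(2)[of n] by (intro mult_right_mono) (auto simp: q_def mult_left_le)
  ultimately have "filterlim (\<lambda>n. q n * (real n)^2) at_top sequentially"
    by (auto intro: filterlim_at_top_mono always_eventually)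
  then show "aas p (\<lambda>n E. real (card (nonadj_dom_pairs n E)) \<ge> C)"
    unfolding p_q aas_one_minus_nonadj_dom_pairs by (rule aas_many_adj_dom_pairs[OF q \<omega> below])
qed

end
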